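(* In $\mathrm{PG}(4,q)$ let $\alpha$ be a plane not contained in $\Sigma_\infty$ and containing no line of $\mathcal S$, and let $\mathcal N$ be a non-degenerate conic in $\alpha$. Then: (1) there is a Baer subplane $\mathcal B$ of $\mathrm{PG}(2,q^2)$ secant to $\ell_\infty$ with $[\mathcal B]=\alpha$, and an $\mathbb F_q$-conic $\mathcal C$ in $\mathcal B$ with $[\mathcal C]=\mathcal N$; (2) if $\mathcal N$ meets $\Sigma_\infty$ in a point of the spread line $[T]$, then $\bar T\in\mathcal C$; (3) if $\mathcal N$ is a $(PQ^q)$-special conic for distinct points $P,Q\in g$, then the $\mathbb F_{q^2}$-conic $\mathcal C^+$ meets $\ell_\infty$ in the points $\bar P,\bar Q$.
   Context: Bruck–Bose setting: $q$ a prime power; $\Sigma_\infty$ a hyperplane of $\mathrm{PG}(4,q)$ with regular spread $\mathcal S$; affine points $A$ of $\mathrm{PG}(2,q^2)$ correspond to points $[A]$ of $\mathrm{PG}(4,q)\setminus\Sigma_\infty$, points $\bar T\in\ell_\infty$ to spread lines $[T]$, lines $\ne\ell_\infty$ to planes not in $\Sigma_\infty$ containing a spread line. In $\mathrm{PG}(4,q^2)$ the transversals of $\mathcal S$ are conjugate lines $g,g^q$ (conjugation $X\mapsto X^q$ on coordinates) with $[T]^\star=TT^q$, $T=[T]^\star\cap g$, giving a bijection $\bar T\leftrightarrow T$ between $\ell_\infty$ and $g$; $\mathcal V^\star$ denotes the extension to $\mathrm{PG}(4,q^2)$. An $\mathbb F_{q^2}$-conic is a non-degenerate conic of $\mathrm{PG}(2,q^2)$;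 an $\mathbb F_q$-conic is a non-degenerate conic of a Baer subplane; $\mathcal C^+$ is the unique $\mathbb F_{q^2}$-conic containing the $\mathbb F_q$-conic $\mathcal C$. For a Baer subplane $\mathcal B$ secant to $\ell_\infty$, $[\mathcal B]$ is the plane of $\mathrm{PG}(4,q)$ whose affine points are $[X]$, $X$ affine in $\mathcal B$; for $\mathcal C\subset \mathcal B$, $[\mathcal C]$ is the closure in $[\mathcal B]$ of $\{[X]:X\in\mathcal C\text{ affine}\}$. A non-degenerate conic $\mathcal N$ of $\mathrm{PG}(4,q)$ is $(PQ^q)$-special if $\mathcal N^\star$ contains one point of the line $PQ^q$ and one point of the line $P^qQ$. *)

theory Defs
  imports "HOL-Analysis.Analysis"
begin

text \<open>The field 'a is GF(q^2);
GF(q) is the fixed field of x \<mapsto> x^q.  PG(2,q^2) uses vectors in 'a^3, with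
l_infinity the line z = 0.  PG(4,q) is realised as the 5-dimensional GF(q)-space
V = {(x,y,z) : x,y in GF(q^2), z in GF(q)} (points = 1-dim GF(q)-subspaces),
Sigma_infinity = {z = 0}, with the regular (Desarguesian) spread whose line [T]
for T = <(a,b,0)> in l_infinity consists of the GF(q)-points <(l a, l b, 0)>.
The affine point <(x,y,1)> of PG(2,q^2) corresponds to the point <(x,y,1)>_GF(q).
PG(4,q^2) = V tensor GF(q^2) is realised as 'a^5 via
v = (x,y,z) \<mapsto> (x, y, x^q, y^q, z); the conjugation fixing V is
(u1,u2,w1,w2,z) \<mapsto> (w1^q, w2^q, u1^q, u2^q, z^q), and the two transversals of
the spread are g = {u3 = u4 = u5 = 0} and g^q = {u1 = u2 = u5 = 0}.
All projective points are represented as the corresponding 1-dimensional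
subspaces (sets of vectors, including 0).\<close>

definition Fq :: "nat \<Rightarrow> 'a::field set" where
  "Fq q = {x. x ^ q = x}"

definition P2 :: "'a::field ^ 3 \<Rightarrow> ('a ^ 3) set" where
  "P2 v = range (\<lambda>c. c *s v)"

definition pts2 :: "('a::field ^ 3) set set" where
  "pts2 = {P2 v | v. v \<noteq> 0}"

definition linf :: "('a::field ^ 3) set set" where
  "linf = {P2 v | v. v \<noteq> 0 \<and> v $ 3 = 0}"

text \<open>Baer subplane with coordinate matrix M (every Baer subplane is the image of
PG(2,q) under a projectivity of PG(2,q^2)).\<close>
definition baer :: "nat \<Rightarrow> 'a::field ^ 3 ^ 3 \<Rightarrow> ('a ^ 3) set set" where
  "baer q M = {P2 (M *v v) | v. v \<noteq> 0 \<and> (\<forall>i. v $ i \<in> Fq q)}"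

definition is_baer :: "nat \<Rightarrow> ('a::field ^ 3) set set \<Rightarrow> bool" where
  "is_baer q B \<longleftrightarrow> (\<exists>M. det M \<noteq> 0 \<and> B = baer q M)"

definition baer_secant :: "nat \<Rightarrow> ('a::field ^ 3) set set \<Rightarrow> bool" where
  "baer_secant q B \<longleftrightarrow> is_baer q B \<and> card (B \<inter> linf) = q + 1"

definition qf :: "'a::comm_ring_1 ^ 3 ^ 3 \<Rightarrow> 'a ^ 3 \<Rightarrow> 'a" where
  "qf A w = (\<Sum>i\<in>UNIV. \<Sum>j\<in>UNIV. A $ i $ j * w $ i * w $ j)"

text \<open>Discriminant of the form sum a_ii x_i^2 + sum_{i<j} a_ij x_i x_j; it is
nonzero iff the conic is non-degenerate (valid in every characteristic).\<close>
definition disc :: "'a::comm_ring_1 ^ 3 ^ 3 \<Rightarrow> 'a" where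
  "disc A = (let a11 = A$1$1; a22 = A$2$2; a33 = A$3$3;
                 a12 = A$1$2 + A$2$1; a13 = A$1$3 + A$3$1; a23 = A$2$3 + A$3$2
             in 4 * a11 * a22 * a33 + a12 * a13 * a23
                - a11 * a23^2 - a22 * a13^2 - a33 * a12^2)"

definition form_over :: "nat \<Rightarrow> 'a::field ^ 3 ^ 3 \<Rightarrow> bool" where
  "form_over q A \<longleftrightarrow> (\<forall>i j. A $ i $ j \<in> Fq q)"

text \<open>F_q-conic of the Baer subplane baer q M with (B-coordinate) form A,
and its F_{q^2}-extension C^+.\<close>
definition baer_conic :: "nat \<Rightarrow> 'a::field ^ 3 ^ 3 \<Rightarrow> 'a ^ 3 ^ 3 \<Rightarrow> ('a ^ 3) set set" where
  "baer_conic q M A = {P2 (M *v v) | v. v \<noteq> 0 \<and> (\<forall>i. v $ i \<in> Fq q) \<and> qf A v = 0}"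

definition baer_conic_plus :: "'a::field ^ 3 ^ 3 \<Rightarrow> 'a ^ 3 ^ 3 \<Rightarrow> ('a ^ 3) set set" where
  "baer_conic_plus M A = {P2 (M *v w) | w. w \<noteq> 0 \<and> qf A w = 0}"

definition Vq :: "nat \<Rightarrow> ('a::field ^ 3) set" where
  "Vq q = {v. v $ 3 \<in> Fq q}"

definition P4 :: "nat \<Rightarrow> 'a::field ^ 3 \<Rightarrow> ('a ^ 3) set" where
  "P4 q v = (\<lambda>c. c *s v) ` Fq q"

definition pts4 :: "nat \<Rightarrow> ('a::field ^ 3) set set" where
  "pts4 q = {P4 q v | v. v \<in> Vq q \<and> v \<noteq> 0}"

definition sigma_inf :: "nat \<Rightarrow> ('a::field ^ 3) set set" where
  "sigma_inf q = {P4 q v | v. v \<noteq> 0 \<and> v $ 3 = 0}"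

definition spread :: "nat \<Rightarrow> ('a::field ^ 3) set \<Rightarrow> ('a ^ 3) set set" where
  "spread q T = {P4 q u | u. u \<noteq> 0 \<and> P2 u = T}"

definition bbset :: "nat \<Rightarrow> ('a::field ^ 3) set set \<Rightarrow> ('a ^ 3) set set" where
  "bbset q S = {P4 q v | v. v $ 3 = 1 \<and> P2 v \<in> S}"

definition comb :: "'a::field ^ 3 ^ 3 \<Rightarrow> 'a ^ 3 \<Rightarrow> 'a ^ 3" where
  "comb b w = (\<Sum>i\<in>UNIV. (w $ i) *s (b $ i))"

definition is_plane4 :: "nat \<Rightarrow> 'a::field ^ 3 ^ 3 \<Rightarrow> bool" where
  "is_plane4 q b \<longleftrightarrow> (\<forall>i. b $ i \<in> Vq q) \<and>
     (\<forall>w. (\<forall>i. w $ i \<in> Fq q) \<and> comb b w = 0 \<longrightarrow> w = 0)"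

definition plane_pts :: "nat \<Rightarrow> 'a::field ^ 3 ^ 3 \<Rightarrow> ('a ^ 3) set set" where
  "plane_pts q b = {P4 q (comb b w) | w. w \<noteq> 0 \<and> (\<forall>i. w $ i \<in> Fq q)}"

definition conic4 :: "nat \<Rightarrow> 'a::field ^ 3 ^ 3 \<Rightarrow> 'a ^ 3 ^ 3 \<Rightarrow> ('a ^ 3) set set" where
  "conic4 q b A = {P4 q (comb b w) | w. w \<noteq> 0 \<and> (\<forall>i. w $ i \<in> Fq q) \<and> qf A w = 0}"

definition nondeg_conic4 :: "nat \<Rightarrow> 'a::field ^ 3 ^ 3 \<Rightarrow> 'a ^ 3 ^ 3 \<Rightarrow> bool" where
  "nondeg_conic4 q b A \<longleftrightarrow> is_plane4 q b \<and> form_over q A \<and> disc A \<noteq> 0"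

definition P5 :: "'a::field ^ 5 \<Rightarrow> ('a ^ 5) set" where
  "P5 u = range (\<lambda>c. c *s u)"

definition emb :: "nat \<Rightarrow> 'a::field ^ 3 \<Rightarrow> 'a ^ 5" where
  "emb q v = vector [v $ 1, v $ 2, (v $ 1) ^ q, (v $ 2) ^ q, v $ 3]"

definition conj5 :: "nat \<Rightarrow> 'a::field ^ 5 \<Rightarrow> 'a ^ 5" where
  "conj5 q u = vector [(u $ 3) ^ q, (u $ 4) ^ q, (u $ 1) ^ q, (u $ 2) ^ q, (u $ 5) ^ q]"

definition cpt :: "nat \<Rightarrow> ('a::field ^ 5) set \<Rightarrow> ('a ^ 5) set" where
  "cpt q X = conj5 q ` X"

definition join5 :: "('a::field ^ 5) set \<Rightarrow> ('a ^ 5) set \<Rightarrow> ('a ^ 5) set set" where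
  "join5 X Y = {P5 x | x. x \<noteq> 0 \<and> (\<exists>u\<in>X. \<exists>v\<in>Y. x = u + v)}"

definition gpts :: "('a::field ^ 5) set set" where
  "gpts = {P5 u | u. u \<noteq> 0 \<and> u $ 3 = 0 \<and> u $ 4 = 0 \<and> u $ 5 = 0}"

definition conic4_ext :: "nat \<Rightarrow> 'a::field ^ 3 ^ 3 \<Rightarrow> 'a ^ 3 ^ 3 \<Rightarrow> ('a ^ 5) set set" where
  "conic4_ext q b A = {P5 (\<Sum>i\<in>UNIV. (w $ i) *s emb q (b $ i)) | w. w \<noteq> 0 \<and> qf A w = 0}"

definition ext_spread :: "nat \<Rightarrow> ('a::field ^ 3) set \<Rightarrow> ('a ^ 5) set set" where
  "ext_spread q T = {X. \<exists>u v. P4 q u \<in> spread q T \<and> P4 q v \<in> spread q T \<and> P4 q u \<noteq> P4 q v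
                          \<and> X \<in> join5 (P5 (emb q u)) (P5 (emb q v))}"

definition corr :: "nat \<Rightarrow> ('a::field ^ 3) set \<Rightarrow> ('a ^ 5) set \<Rightarrow> bool" where
  "corr q Tb P \<longleftrightarrow> Tb \<in> linf \<and> ext_spread q Tb \<inter> gpts = {P}"

definition special :: "nat \<Rightarrow> 'a::field ^ 3 ^ 3 \<Rightarrow> 'a ^ 3 ^ 3 \<Rightarrow> ('a ^ 5) set \<Rightarrow> ('a ^ 5) set \<Rightarrow> bool" where
  "special q b A P Q \<longleftrightarrow> nondeg_conic4 q b A \<and>
     (\<exists>X. X \<in> conic4_ext q b A \<and> X \<in> join5 P (cpt q Q)) \<and>
     (\<exists>Y. Y \<in> conic4_ext q b A \<and> Y \<in> join5 (cpt q P) Q)"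

end

theory Submission
  imports Defs "HOL-Computational_Algebra.Polynomial" "HOL-Number_Theory.Residues"
begin

text \<open>
  The witnesses are the obvious ones: the Baer subplane is the image of PG(2,q) under the matrix
  whose columns span the plane alpha, and the F_q-conic is given by the same form as N.  Everything
  then hinges on this matrix being non-singular over GF(q^2).  Its kernel would lie in the plane
  of coordinates mapped into Sigma_infinity, so it suffices that the two points d1, d2 spanning the
  line alpha \<inter> Sigma_infinity are independent over GF(q^2); a relation d2 = mu d1 with mu outside
  GF(q) would put the whole spread line through d1 into alpha, since GF(q^2) = GF(q) + mu GF(q).

  For part (3), the special condition provides points of C^+ on the two lines through the
  conjugates of P and Q, which project to the points of l_infinity corresponding to P and Q.  There
  are no others: a binary quadratic form with three pairwise independent zeros vanishes, and then
  the form of C^+ would vanish on a plane, forcing the discriminant to be zero.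
\<close>

section \<open>The subfield GF(q) of GF(q^2)\<close>

text \<open>The library version finite_field_power_card_eq_same needs the sort finite_field.\<close>
lemma finite_field_power_card:
  fixes x :: "'a::{field,finite}"
  shows "x ^ CARD('a) = x"
proof (cases "x = 0")
  case False
  let ?U = "UNIV - {0 :: 'a}"
  have perm: "(*) x ` ?U = ?U"
  proof
    show "?U \<subseteq> (*) x ` ?U"
    proof
      fix y :: 'a assume "y \<in> ?U"
      then have "y = x * (y / x)" "y / x \<in> ?U" using False by auto
      then show "y \<in> (*) x ` ?U" by blast
    qed
  qed (use False in auto)
  have "\<Prod>?U = \<Prod>((*) x ` ?U)" using perm by simp
  also have "\<dots> = prod ((*) x) ?U"
    by (simp add: prod.reindex inj_on_def False)
  also have "\<dots> = x ^ card ?U * \<Prod>?U"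
    by (simp add: prod.distrib)
  finally have "x ^ card ?U * \<Prod>?U = 1 * \<Prod>?U"
    by simp
  moreover have "\<Prod>?U \<noteq> 0"
    by simp
  ultimately have "x ^ card ?U = 1"
    using mult_right_cancel by blast
  have "card ?U = CARD('a) - 1"
    by (simp add: card_Diff_singleton)
  then have "CARD('a) = Suc (card ?U)"
    using card_gt_0_iff[of "UNIV :: 'a set"] by simp
  then have "x ^ CARD('a) = x * x ^ card ?U"
    by (simp only: power_Suc)
  with \<open>x ^ card ?U = 1\<close> show ?thesis
    by simp
qed (simp add: finite_UNIV_card_ge_0)

lemma Fq_1 [simp]: "(1::'a::field) \<in> Fq q"
  by (simp add: Fq_def)

lemma Fq_mult [intro]: "(x::'a::field) \<in> Fq q \<Longrightarrow> y \<in> Fq q \<Longrightarrow> x * y \<in> Fq q"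
  by (simp add: Fq_def power_mult_distrib)

lemma Fq_inverse [intro]: "(x::'a::field) \<in> Fq q \<Longrightarrow> inverse x \<in> Fq q"
  by (simp add: Fq_def power_inverse)

lemma Fq_divide [intro]: "(x::'a::field) \<in> Fq q \<Longrightarrow> y \<in> Fq q \<Longrightarrow> x / y \<in> Fq q"
  by (simp add: Fq_def power_divide)

locale gf_square =
  fixes q :: nat
  assumes prime_power: "\<exists>p k. prime p \<and> k \<ge> 1 \<and> q = p ^ k"
    and card_field: "CARD('a::{field,finite}) = q ^ 2"
begin

lemma CHAR_prime: "prime CHAR('a)"
  by (rule prime_CHAR_semidom) (simp add: finite_imp_CHAR_pos)

lemma q_CHAR_power: "\<exists>k. q = CHAR('a) ^ k" and q_ge_2: "q \<ge> 2"
proof -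
  obtain p k where p: "prime p" "k \<ge> 1" "q = p ^ k"
    using prime_power by blast
  have "CHAR('a) dvd p ^ (2 * k)"
    using CHAR_dvd_CARD[where 'a='a] card_field p(3)
    by (simp add: power_mult[symmetric] mult.commute)
  then have "CHAR('a) = p"
    using CHAR_prime p(1) prime_dvd_power primes_dvd_imp_eq by blast
  then show "\<exists>k. q = CHAR('a) ^ k"
    using p(3) by blast
  have "p ^ 1 \<le> p ^ k"
    using p(2) prime_gt_0_nat[OF p(1)] by (intro power_increasing) auto
  then show "q \<ge> 2"
    using p(3) prime_ge_2_nat[OF p(1)] by simp
qed

lemma frobenius_add: "((x::'a) + y) ^ q = x ^ q + y ^ q"
  using CHAR_prime q_CHAR_power freshmans_dream' by blast

lemma frobenius_involution: "((x::'a) ^ q) ^ q = x"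
  using finite_field_power_card[of x] card_field
  by (simp add: power_mult[symmetric] power2_eq_square)

lemma frobenius_uminus: "(- (x::'a)) ^ q = - (x ^ q)"
  using frobenius_add[of x "- x"] q_ge_2 by (simp add: power_0_left eq_neg_iff_add_eq_0 add.commute)

lemma frobenius_diff: "((x::'a) - y) ^ q = x ^ q - y ^ q"
  using frobenius_add[of x "- y"] frobenius_uminus[of y] by simp

lemma Fq_0 [simp]: "(0::'a) \<in> Fq q"
  using q_ge_2 by (simp add: Fq_def)

lemma Fq_add [intro]: "(x::'a) \<in> Fq q \<Longrightarrow> y \<in> Fq q \<Longrightarrow> x + y \<in> Fq q"
  by (simp add: Fq_def frobenius_add)

lemma Fq_uminus [intro]: "(x::'a) \<in> Fq q \<Longrightarrow> - x \<in> Fq q"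
  by (simp add: Fq_def frobenius_uminus)

lemma Fq_diff [intro]: "(x::'a) \<in> Fq q \<Longrightarrow> y \<in> Fq q \<Longrightarrow> x - y \<in> Fq q"
  by (simp add: Fq_def frobenius_diff)

lemma exists_not_Fq: "\<exists>mu::'a. mu \<notin> Fq q"
proof -
  define f :: "'a poly" where "f = Polynomial.monom 1 q + [:0, -1:]"
  have deg: "degree f = q"
    using q_ge_2 by (simp add: f_def degree_add_eq_left degree_monom_eq)
  have "Fq q = {x. poly f x = 0}"
    by (simp add: Fq_def f_def poly_monom)
  moreover have "f \<noteq> 0"
    using deg q_ge_2 by auto
  ultimately have "card (Fq q :: 'a set) \<le> q"
    using card_poly_roots_bound[of f] deg by simp
  also have "\<dots> < CARD('a)"
    using q_ge_2 card_field by (simp add: power2_eq_square)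
  finally have "Fq q \<noteq> (UNIV :: 'a set)"
    by auto
  then show ?thesis
    by blast
qed

text \<open>GF(q^2) is a 2-dimensional GF(q)-space with basis 1, mu for any mu outside GF(q); the
  coordinates are recovered by applying the Frobenius map.\<close>
lemma Fq_decomp:
  assumes mu: "(mu::'a) \<notin> Fq q"
  shows "\<exists>s t. s \<in> Fq q \<and> t \<in> Fq q \<and> l = s + t * mu"
proof -
  have d: "mu - mu ^ q \<noteq> 0"
    using mu by (simp add: Fq_def)
  define t where "t = (l - l ^ q) / (mu - mu ^ q)"
  define s where "s = l - t * mu"
  have tq: "t ^ q = t"
  proof -
    have "t ^ q = (l ^ q - l) / (mu ^ q - mu)"
      by (simp add: t_def power_divide frobenius_diff frobenius_involution)
    also have "\<dots> = t"
      unfolding t_def by (metis minus_diff_eq minus_divide_divide)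
    finally show ?thesis .
  qed
  have "s ^ q = l ^ q - t * mu ^ q"
    by (simp add: s_def frobenius_diff power_mult_distrib tq)
  also have "\<dots> = s"
  proof -
    have "t * (mu - mu ^ q) = l - l ^ q"
      using d by (simp add: t_def)
    then show ?thesis
      by (simp add: s_def algebra_simps)
  qed
  finally show ?thesis
    using tq by (intro exI[of _ s] exI[of _ t]) (simp add: Fq_def s_def)
qed

lemma card_Fq: "card (Fq q :: 'a set) = q"
proof -
  obtain mu :: 'a where mu: "mu \<notin> Fq q"
    using exists_not_Fq by blast
  let ?f = "\<lambda>(s, t). s + t * mu"
  have "inj_on ?f (Fq q \<times> Fq q)"
  proof (rule inj_onI, clarsimp)
    fix s t s' t' :: 'a
    assume h: "s \<in> Fq q" "t \<in> Fq q" "s' \<in> Fq q" "t' \<in> Fq q" "s + t * mu = s' + t' * mu"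
    show "s = s' \<and> t = t'"
    proof (cases "t = t'")
      case False
      then have "mu = (s' - s) / (t - t')"
        using h(5) by (simp add: field_simps)
      then show ?thesis
        using h mu by auto
    qed (use h in simp)
  qed
  moreover have "?f ` (Fq q \<times> Fq q) = UNIV"
  proof -
    have "l \<in> ?f ` (Fq q \<times> Fq q)" for l
      using Fq_decomp[OF mu, of l] by force
    then show ?thesis
      by blast
  qed
  ultimately have "card (Fq q \<times> Fq q :: ('a \<times> 'a) set) = CARD('a)"
    by (metis card_image)
  then have "card (Fq q :: 'a set) ^ 2 = q ^ 2"
    using card_field by (simp add: card_cartesian_product power2_eq_square)
  then show ?thesis
    by simp
qed

end

section \<open>Projective points\<close>

lemma smult_image_eq_imp_smult:
  fixes x y :: "'a::field ^ 'n"
  assumes "1 \<in> S" "x \<noteq> 0" "(\<lambda>c. c *s x) ` S = (\<lambda>c. c *s y) ` S"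
  shows "\<exists>c\<in>S. c \<noteq> 0 \<and> x = c *s y"
proof -
  have "x \<in> (\<lambda>c. c *s x) ` S"
    using assms(1) by force
  then obtain c where "c \<in> S" "x = c *s y"
    using assms(3) by auto
  then show ?thesis
    using assms(2) by auto
qed

lemma smult_image_smult:
  fixes x :: "'a::field ^ 'n"
  assumes "c \<in> S" "c \<noteq> 0" "\<And>x y. x \<in> S \<Longrightarrow> y \<in> S \<Longrightarrow> x * y \<in> S" "\<And>x. x \<in> S \<Longrightarrow> inverse x \<in> S"
  shows "(\<lambda>d. d *s (c *s x)) ` S = (\<lambda>d. d *s x) ` S"
proof
  show "(\<lambda>d. d *s (c *s x)) ` S \<subseteq> (\<lambda>d. d *s x) ` S"
    using assms by auto
  show "(\<lambda>d. d *s x) ` S \<subseteq> (\<lambda>d. d *s (c *s x)) ` S"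
  proof
    fix v assume "v \<in> (\<lambda>d. d *s x) ` S"
    then obtain d where d: "d \<in> S" "v = d *s x"
      by auto
    then have "v = (d * inverse c) *s (c *s x)" "d * inverse c \<in> S"
      using assms by simp_all
    then show "v \<in> (\<lambda>d. d *s (c *s x)) ` S"
      by blast
  qed
qed

lemma P2_eq_imp_smult: "x \<noteq> 0 \<Longrightarrow> P2 x = P2 y \<Longrightarrow> \<exists>c. c \<noteq> 0 \<and> x = c *s y"
  using smult_image_eq_imp_smult[of UNIV x y] by (auto simp: P2_def)

lemma P2_smult: "c \<noteq> 0 \<Longrightarrow> P2 (c *s x) = P2 x"
  using smult_image_smult[of c UNIV x] by (simp add: P2_def)

lemma P5_eq_imp_smult: "x \<noteq> 0 \<Longrightarrow> P5 x = P5 y \<Longrightarrow> \<exists>c. c \<noteq> 0 \<and> x = c *s y"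
  using smult_image_eq_imp_smult[of UNIV x y] by (auto simp: P5_def)

lemma P5_smult: "c \<noteq> 0 \<Longrightarrow> P5 (c *s x) = P5 x"
  using smult_image_smult[of c UNIV x] by (simp add: P5_def)

lemma P4_eq_imp_smult: "x \<noteq> 0 \<Longrightarrow> P4 q x = P4 q y \<Longrightarrow> \<exists>c\<in>Fq q. c \<noteq> 0 \<and> x = c *s y"
  using smult_image_eq_imp_smult[of "Fq q" x y] by (simp add: P4_def)

lemma P4_smult: "c \<in> Fq q \<Longrightarrow> c \<noteq> 0 \<Longrightarrow> P4 q (c *s x) = P4 q x"
  using smult_image_smult[of c "Fq q" x] by (auto simp: P4_def)

lemma P2_in_linf_iff: "x \<noteq> 0 \<Longrightarrow> P2 x \<in> linf \<longleftrightarrow> x $ 3 = 0"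
  by (auto simp: linf_def dest: P2_eq_imp_smult)

lemma P4_in_sigma_inf_iff: "x \<noteq> 0 \<Longrightarrow> P4 q x \<in> sigma_inf q \<longleftrightarrow> x $ 3 = 0"
  by (auto simp: sigma_inf_def dest: P4_eq_imp_smult)

section \<open>Ternary quadratic forms\<close>

lemma scalar_product_3:
  "scalar_product n w = n $ 1 * w $ 1 + n $ 2 * w $ 2 + n $ 3 * (w :: 'a::semiring_1 ^ 3) $ 3"
  by (simp add: scalar_product_def sum_3)

lemma qf_3: "qf A w = A$1$1 * w$1^2 + A$2$2 * w$2^2 + A$3$3 * w$3^2 + (A$1$2 + A$2$1) * w$1 * w$2
    + (A$1$3 + A$3$1) * w$1 * w$3 + (A$2$3 + A$3$2) * w$2 * w$3"
  unfolding qf_def by (simp add: sum_3 algebra_simps power2_eq_square)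

lemma qf_smult: "qf A (c *s w) = c^2 * qf A w"
  by (simp add: qf_3 algebra_simps power2_eq_square)

lemma qf_lincomb:
  "qf A (x *s u + y *s v) = qf A u * x^2 + (qf A (u + v) - qf A u - qf A v) * x * y + qf A v * y^2"
  by (simp add: qf_3 algebra_simps power2_eq_square)

text \<open>The vectors e_i \<times> n span the plane orthogonal to n; evaluating the form at them and
  at their pairwise sums yields n_i^4 \<cdot> disc A = 0 for each i.\<close>
lemma disc_eq_0_if_qf_vanishes_on_plane:
  fixes A :: "'a::field ^ 3 ^ 3" and n :: "'a ^ 3"
  assumes "n \<noteq> 0" and vanish: "\<And>w. scalar_product n w = 0 \<Longrightarrow> qf A w = 0"
  shows "disc A = 0"
proof -
  define v1 v2 v3 where "v1 = (vector [0, - n$3, n$2] :: 'a ^ 3)"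
    and "v2 = (vector [n$3, 0, - n$1] :: 'a ^ 3)" and "v3 = (vector [- n$2, n$1, 0] :: 'a ^ 3)"
  have "qf A v1 = 0" "qf A v2 = 0" "qf A v3 = 0"
    "qf A (v1 + v2) = 0" "qf A (v1 + v3) = 0" "qf A (v2 + v3) = 0"
    by (auto intro!: vanish simp: scalar_product_3 v1_def v2_def v3_def algebra_simps)
  then have "n$1^4 * disc A = 0" "n$2^4 * disc A = 0" "n$3^4 * disc A = 0"
    unfolding qf_3 disc_def Let_def v1_def v2_def v3_def
    by (simp_all add: algebra_simps, Groebner_Basis.algebra+)
  moreover have "n$1 \<noteq> 0 \<or> n$2 \<noteq> 0 \<or> n$3 \<noteq> 0"
    using assms(1) by (auto simp: vec_eq_iff forall_3)
  ultimately show ?thesis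
    by auto
qed

lemma binary_form_eq_0_if_three_zeros:
  fixes a m c x1 t1 x2 t2 x3 t3 :: "'a::field"
  assumes "a * x1^2 + m * x1 * t1 + c * t1^2 = 0" "a * x2^2 + m * x2 * t2 + c * t2^2 = 0"
    "a * x3^2 + m * x3 * t3 + c * t3^2 = 0"
    and "x1 * t2 - x2 * t1 \<noteq> 0" "x1 * t3 - x3 * t1 \<noteq> 0" "x2 * t3 - x3 * t2 \<noteq> 0"
  shows "a = 0 \<and> m = 0 \<and> c = 0"
proof -
  let ?D = "(x1 * t2 - x2 * t1) * (x1 * t3 - x3 * t1) * (x2 * t3 - x3 * t2)"
  have "?D * a = 0" "?D * m = 0" "?D * c = 0"
    using assms(1-3) by Groebner_Basis.algebra+
  then show ?thesis
    using assms(4-6) by simp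
qed

lemma proportional_if_det_eq_0:
  fixes x1 y1 x2 y2 :: "'a::field"
  assumes "x1 * y2 - x2 * y1 = 0" "x2 \<noteq> 0 \<or> y2 \<noteq> 0"
  shows "\<exists>l. x1 = l * x2 \<and> y1 = l * y2"
proof (cases "x2 = 0")
  case True
  then show ?thesis
    using assms by (intro exI[of _ "y1 / y2"]) (auto simp: field_simps)
next
  case False
  then show ?thesis
    using assms by (intro exI[of _ "x1 / x2"]) (auto simp: field_simps)
qed

definition plane_basis :: "'a::field set \<Rightarrow> 'a ^ 3 \<Rightarrow> 'a ^ 3 \<Rightarrow> 'a ^ 3 \<Rightarrow> bool" where
  "plane_basis S n u v \<longleftrightarrow>
     scalar_product n u = 0 \<and> scalar_product n v = 0 \<and> (\<forall>i. u $ i \<in> S \<and> v $ i \<in> S) \<and>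
     (\<forall>x y. x *s u + y *s v = 0 \<longrightarrow> x = 0 \<and> y = 0) \<and>
     (\<forall>w. scalar_product n w = 0 \<longrightarrow>
        (\<exists>x y. w = x *s u + y *s v \<and> ((\<forall>i. w $ i \<in> S) \<longrightarrow> x \<in> S \<and> y \<in> S)))"

lemma plane_basis_exists:
  fixes n :: "'a::field ^ 3"
  assumes "n \<noteq> 0" "\<forall>i. n $ i \<in> S" "0 \<in> S" "\<And>x. x \<in> S \<Longrightarrow> - x \<in> S"
    "\<And>x y. x \<in> S \<Longrightarrow> y \<in> S \<Longrightarrow> x / y \<in> S"
  shows "\<exists>u v. plane_basis S n u v"
proof -
  obtain k where k: "n $ k \<noteq> 0"
    using assms(1) by (auto simp: vec_eq_iff)
  have "(1::3) \<noteq> 2" "(1::3) \<noteq> 3" "(2::3) \<noteq> 3"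
    by simp_all
  then obtain i j :: 3 where ijk: "i \<noteq> j" "i \<noteq> k" "j \<noteq> k"
    using exhaust_3[of k] by (elim disjE) (metis, metis, metis)
  have univ: "UNIV = {i, j, k}"
    using ijk by (intro card_seteq[symmetric]) auto
  have dot: "scalar_product n w = n$i * w$i + n$j * w$j + n$k * w$k" for w
    using ijk by (simp add: scalar_product_def univ algebra_simps)
  define u :: "'a ^ 3" where "u = (\<chi> l. if l = i then n$k else if l = k then - n$i else 0)"
  define v :: "'a ^ 3" where "v = (\<chi> l. if l = j then n$k else if l = k then - n$j else 0)"
  have span: "w = (w$i / n$k) *s u + (w$j / n$k) *s v" if "scalar_product n w = 0" for w
  proof (subst vec_eq_iff, intro allI)
    fix l
    have "n$k * w$k = - (n$i * w$i + n$j * w$j)"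
      using that unfolding dot by (simp add: eq_neg_iff_add_eq_0 algebra_simps)
    then have wk: "w$k = - (n$i * w$i + n$j * w$j) / n$k"
      using k by (simp add: eq_divide_eq mult.commute)
    have "l = i \<or> l = j \<or> l = k"
      using univ by blast
    then show "w $ l = ((w$i / n$k) *s u + (w$j / n$k) *s v) $ l"
    proof (elim disjE)
      assume "l = k"
      then show ?thesis
        using ijk k wk by (simp add: u_def v_def) (simp add: field_simps)
    qed (use ijk k in \<open>simp_all add: u_def v_def\<close>)
  qed
  have "plane_basis S n u v"
    unfolding plane_basis_def
  proof (intro conjI allI impI)
    show "scalar_product n u = 0" "scalar_product n v = 0"
      using ijk by (simp_all add: dot u_def v_def algebra_simps)
    show "u $ l \<in> S" "v $ l \<in> S" for l
      using assms(2-4) by (simp_all add: u_def v_def)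
    show "x = 0" "y = 0" if "x *s u + y *s v = 0" for x y
      using arg_cong[OF that, of "\<lambda>w. w $ i"] arg_cong[OF that, of "\<lambda>w. w $ j"] ijk k
      by (simp_all add: u_def v_def)
    show "\<exists>x y. w = x *s u + y *s v \<and> ((\<forall>i. w $ i \<in> S) \<longrightarrow> x \<in> S \<and> y \<in> S)"
      if "scalar_product n w = 0" for w
    proof (intro exI conjI impI)
      show "w = (w$i / n$k) *s u + (w$j / n$k) *s v"
        using span[OF that] .
      show "w$i / n$k \<in> S" "w$j / n$k \<in> S" if "\<forall>i. w $ i \<in> S"
        using that assms(2,5) by simp_all
    qed
  qed
  then show ?thesis
    by blast
qed

section \<open>The transversal g\<close>

lemma exhaust_5:
  fixes i :: 5
  shows "i = 1 \<or> i = 2 \<or> i = 3 \<or> i = 4 \<or> i = 5"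
proof (induct i)
  case (of_int z)
  then have "z = 0 \<or> z = 1 \<or> z = 2 \<or> z = 3 \<or> z = 4"
    by fastforce
  then show ?case
    by auto
qed

lemma forall_5: "(\<forall>i::5. P i) \<longleftrightarrow> P 1 \<and> P 2 \<and> P 3 \<and> P 4 \<and> P 5"
  by (metis exhaust_5)

lemma vector_5 [simp]:
  "(vector [x1, x2, x3, x4, x5] :: 'a::zero ^ 5) $ 1 = x1"
  "(vector [x1, x2, x3, x4, x5] :: 'a ^ 5) $ 2 = x2"
  "(vector [x1, x2, x3, x4, x5] :: 'a ^ 5) $ 3 = x3"
  "(vector [x1, x2, x3, x4, x5] :: 'a ^ 5) $ 4 = x4"
  "(vector [x1, x2, x3, x4, x5] :: 'a ^ 5) $ 5 = x5"
  unfolding vector_def by simp_all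

lemma emb_lincomb_components:
  fixes b :: "'a::field ^ 3 ^ 3"
  shows "(\<Sum>i\<in>UNIV. w $ i *s emb q (b $ i)) $ 1 = comb b w $ 1"
    and "(\<Sum>i\<in>UNIV. w $ i *s emb q (b $ i)) $ 2 = comb b w $ 2"
    and "(\<Sum>i\<in>UNIV. w $ i *s emb q (b $ i)) $ 5 = comb b w $ 3"
  by (simp_all add: comb_def emb_def)

text \<open>The point [T]^star \<inter> g of the transversal g, for T = P2 t on l_infinity.\<close>
definition g_point :: "'a::zero ^ 3 \<Rightarrow> 'a ^ 5" where
  "g_point t = vector [t $ 1, t $ 2, 0, 0, 0]"

lemma g_point_neq_0: "t $ 3 = 0 \<Longrightarrow> t \<noteq> 0 \<Longrightarrow> g_point t \<noteq> 0"
  by (auto simp: g_point_def vec_eq_iff forall_3 forall_5)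

context gf_square
begin

lemma spread_point_smult:
  assumes "P4 q u \<in> spread q (P2 t)" "(t :: 'a ^ 3) \<noteq> 0"
  shows "\<exists>l. u = l *s t"
proof -
  obtain u' where u': "u' \<noteq> 0" "P2 u' = P2 t" "P4 q u = P4 q u'"
    using assms(1) by (auto simp: spread_def)
  obtain m where m: "u' = m *s t"
    using P2_eq_imp_smult[OF u'(1,2)] by blast
  have "u' \<in> P4 q u'"
    unfolding P4_def by (rule image_eqI[of _ _ 1]) simp_all
  then have "u' \<in> P4 q u"
    using u'(3) by simp
  then obtain c where c: "c \<in> Fq q" "u' = c *s u"
    by (auto simp: P4_def)
  then have "u = (m / c) *s t"
    using u'(1) m by (auto simp: vec_eq_iff field_simps)
  then show ?thesis
    by blast
qed

lemma ext_spread_inter_g_subset: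
  assumes t: "(t :: 'a ^ 3) \<noteq> 0" "t $ 3 = 0"
  shows "ext_spread q (P2 t) \<inter> gpts \<subseteq> {P5 (g_point t)}"
proof
  fix X assume X: "X \<in> ext_spread q (P2 t) \<inter> gpts"
  then obtain u v where uv: "P4 q u \<in> spread q (P2 t)" "P4 q v \<in> spread q (P2 t)"
      "X \<in> join5 (P5 (emb q u)) (P5 (emb q v))"
    by (auto simp: ext_spread_def)
  obtain l l' where l: "u = l *s t" "v = l' *s t"
    using spread_point_smult[OF uv(1) t(1)] spread_point_smult[OF uv(2) t(1)] by blast
  obtain x al be where x: "X = P5 x" "x \<noteq> 0" "x = al *s emb q u + be *s emb q v"
    using uv(3) by (auto simp: join5_def P5_def)
  obtain y where y: "X = P5 y" "y $ 3 = 0" "y $ 4 = 0"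
    using X by (auto simp: gpts_def)
  obtain c where "x = c *s y"
    using P5_eq_imp_smult[OF x(2), of y] x(1) y(1) by auto
  then have "x $ 3 = 0" "x $ 4 = 0"
    using y(2,3) by simp_all
  then have xg: "x = (al * l + be * l') *s g_point t"
    using x(3) l t(2) by (simp add: vec_eq_iff forall_5 emb_def g_point_def algebra_simps)
  have "al * l + be * l' \<noteq> 0"
    using x(2) xg by (metis vector_smult_lzero)
  from P5_smult[OF this, of "g_point t"] show "X \<in> {P5 (g_point t)}"
    using x(1) xg by (simp only: singleton_iff)
qed

text \<open>For mu outside GF(q), the points [t] and [mu t] of the spread line are distinct, and
  mu^q emb t - emb (mu t) is a nonzero multiple of g_point t.\<close>
lemma g_point_in_ext_spread:
  assumes t: "(t :: 'a ^ 3) \<noteq> 0" "t $ 3 = 0"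
  shows "P5 (g_point t) \<in> ext_spread q (P2 t)"
proof -
  obtain mu :: 'a where mu: "mu \<notin> Fq q"
    using exists_not_Fq by blast
  then have mu0: "mu \<noteq> 0"
    using Fq_0 by metis
  have kap: "mu ^ q - mu \<noteq> 0"
    using mu by (simp add: Fq_def)
  have mt: "mu *s t \<noteq> 0"
    using t(1) mu0 by (auto simp: vec_eq_iff)
  have in_spread: "P4 q t \<in> spread q (P2 t)" "P4 q (mu *s t) \<in> spread q (P2 t)"
    using t(1) mt P2_smult[OF mu0, of t] by (auto simp: spread_def)
  have distinct: "P4 q t \<noteq> P4 q (mu *s t)"
  proof
    assume "P4 q t = P4 q (mu *s t)"
    then obtain c where c: "c \<in> Fq q" "t = c *s (mu *s t)"
      using P4_eq_imp_smult[OF t(1)] by blast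
    obtain i where i: "t $ i \<noteq> 0"
      using t(1) by (auto simp: vec_eq_iff)
    have "t $ i = (c * mu) * t $ i"
      using arg_cong[OF c(2), of "\<lambda>v. v $ i"] by simp
    then have "c * mu = 1"
      using i by simp
    then have "mu = inverse c"
      by (rule inverse_unique[symmetric])
    then show False
      using c(1) mu by auto
  qed
  let ?x = "mu ^ q *s emb q t + (-1) *s emb q (mu *s t)"
  have xg: "?x = (mu ^ q - mu) *s g_point t"
    using t(2) by (simp add: vec_eq_iff forall_5 emb_def g_point_def algebra_simps)
  have "P5 (g_point t) \<in> join5 (P5 (emb q t)) (P5 (emb q (mu *s t)))"
    unfolding join5_def P5_def
    using kap g_point_neq_0[OF t(2,1)] xg P5_smult[OF kap, of "g_point t"]
    by (auto simp: P5_def intro!: exI[of _ ?x])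
  then show ?thesis
    unfolding ext_spread_def using in_spread distinct by blast
qed

lemma ext_spread_inter_g:
  assumes "(t :: 'a ^ 3) \<noteq> 0" "t $ 3 = 0"
  shows "ext_spread q (P2 t) \<inter> gpts = {P5 (g_point t)}"
  using ext_spread_inter_g_subset[OF assms] g_point_in_ext_spread[OF assms]
    g_point_neq_0[OF assms(2,1)]
  by (auto simp: gpts_def g_point_def)

lemma corr_iff:
  assumes "(p :: 'a ^ 5) \<noteq> 0" "p $ 3 = 0" "p $ 4 = 0" "p $ 5 = 0"
  shows "corr q T (P5 p) \<longleftrightarrow> T = P2 (vector [p $ 1, p $ 2, 0])"
proof -
  let ?t = "vector [p $ 1, p $ 2, 0] :: 'a ^ 3"
  have t: "?t \<noteq> 0" "?t $ 3 = 0"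
    using assms by (auto simp: vec_eq_iff forall_3 forall_5)
  have gt: "g_point ?t = p"
    using assms by (simp add: vec_eq_iff forall_5 g_point_def)
  show ?thesis
  proof
    assume c: "corr q T (P5 p)"
    then obtain s where s: "T = P2 s" "s \<noteq> 0" "s $ 3 = 0"
      by (auto simp: corr_def linf_def)
    then have "P5 (g_point s) = P5 p"
      using c ext_spread_inter_g[OF s(2,3)] by (simp add: corr_def)
    then obtain k where k: "k \<noteq> 0" "g_point s = k *s p"
      using P5_eq_imp_smult g_point_neq_0[OF s(3,2)] by metis
    then have "s = k *s ?t"
      using arg_cong[OF k(2), of "\<lambda>v. v $ 1"] arg_cong[OF k(2), of "\<lambda>v. v $ 2"] s(3)
      by (simp add: vec_eq_iff forall_3 g_point_def)
    then show "T = P2 ?t"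
      using s(1) P2_smult[OF k(1)] by simp
  next
    assume "T = P2 ?t"
    then show "corr q T (P5 p)"
      using ext_spread_inter_g[OF t] gt P2_in_linf_iff[OF t(1)] t(2) by (simp add: corr_def)
  qed
qed

end

section \<open>The plane alpha and its Baer subplane\<close>

lemma comb_eq_transpose: "comb b w = transpose b *v w"
  by (simp add: comb_def matrix_vector_mult_def transpose_def vec_eq_iff mult.commute)

lemma comb_0 [simp]: "comb b 0 = 0"
  by (simp add: comb_eq_transpose)

lemma comb_lincomb: "comb b (x *s u + y *s v) = x *s comb b u + y *s comb b v"
  by (simp add: comb_def vec_eq_iff sum.distrib sum_distrib_left algebra_simps)

lemma comb_smult: "comb b (c *s w) = c *s comb b w"
  using comb_lincomb[of b c w 0 0] by simp

lemma join5_commute: "join5 X Y = join5 Y X"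
  unfolding join5_def by (metis (no_types, lifting) add.commute)

locale bruck_bose_conic = gf_square q for q +
  fixes b A :: "'a::{field,finite} ^ 3 ^ 3"
  assumes nondeg: "nondeg_conic4 q b A"
    and not_in_sigma_inf: "\<not> plane_pts q b \<subseteq> sigma_inf q"
    and no_spread_line: "\<forall>T\<in>linf. \<not> spread q T \<subseteq> plane_pts q b"
begin

lemma comb_Fq_eq_0: "\<forall>i. w $ i \<in> Fq q \<Longrightarrow> comb b w = 0 \<Longrightarrow> w = 0"
  using nondeg by (simp add: nondeg_conic4_def is_plane4_def)

definition inf_normal :: "'a ^ 3" where
  "inf_normal = (\<chi> i. b $ i $ 3)"

lemma comb_component_3: "comb b w $ 3 = scalar_product inf_normal w"
  by (simp add: comb_def inf_normal_def scalar_product_def mult.commute)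

lemma inf_normal_Fq: "\<forall>i. inf_normal $ i \<in> Fq q"
  using nondeg by (simp add: nondeg_conic4_def is_plane4_def Vq_def inf_normal_def)

lemma comb_component_3_Fq: "\<forall>i. w $ i \<in> Fq q \<Longrightarrow> comb b w $ 3 \<in> Fq q"
  using inf_normal_Fq by (simp add: comb_component_3 scalar_product_3 Fq_add Fq_mult)

lemma inf_normal_neq_0: "inf_normal \<noteq> 0"
proof
  assume "inf_normal = 0"
  obtain w where w: "w \<noteq> 0" "\<forall>i. w $ i \<in> Fq q" "P4 q (comb b w) \<notin> sigma_inf q"
    using not_in_sigma_inf by (auto simp: plane_pts_def)
  have "comb b w \<noteq> 0"
    using comb_Fq_eq_0 w(1,2) by blast
  moreover have "comb b w $ 3 = 0"
    using \<open>inf_normal = 0\<close> by (simp add: comb_component_3 scalar_product_def)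
  ultimately show False
    using w(3) P4_in_sigma_inf_iff by blast
qed

definition u1 :: "'a ^ 3" where
  "u1 = (SOME u. \<exists>v. plane_basis (Fq q) inf_normal u v)"

definition u2 :: "'a ^ 3" where
  "u2 = (SOME v. plane_basis (Fq q) inf_normal u1 v)"

lemma plane_basis_u: "plane_basis (Fq q) inf_normal u1 u2"
proof -
  have "\<exists>u v. plane_basis (Fq q) inf_normal u v"
    by (rule plane_basis_exists[OF inf_normal_neq_0 inf_normal_Fq]) auto
  then have "\<exists>v. plane_basis (Fq q) inf_normal u1 v"
    unfolding u1_def by (rule someI_ex)
  then show ?thesis
    unfolding u2_def by (rule someI_ex)
qed

lemma u_lincomb_Fq: "x \<in> Fq q \<Longrightarrow> y \<in> Fq q \<Longrightarrow> \<forall>i. (x *s u1 + y *s u2) $ i \<in> Fq q"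
  using plane_basis_u by (auto simp: plane_basis_def)

lemma u_independent: "x *s u1 + y *s u2 = 0 \<Longrightarrow> x = 0 \<and> y = 0"
  using plane_basis_u by (simp add: plane_basis_def)

lemma u_span:
  "scalar_product inf_normal w = 0 \<Longrightarrow>
    \<exists>x y. w = x *s u1 + y *s u2 \<and> ((\<forall>i. w $ i \<in> Fq q) \<longrightarrow> x \<in> Fq q \<and> y \<in> Fq q)"
  using plane_basis_u by (simp add: plane_basis_def)

text \<open>d1, d2 span the line alpha \<inter> Sigma_infinity.\<close>
definition d1 :: "'a ^ 3" where
  "d1 = comb b u1"

definition d2 :: "'a ^ 3" where
  "d2 = comb b u2"

lemma comb_u_lincomb: "comb b (x *s u1 + y *s u2) = x *s d1 + y *s d2"
  by (simp add: comb_lincomb d1_def d2_def)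

lemma d_component_3: "d1 $ 3 = 0" "d2 $ 3 = 0"
  using plane_basis_u by (simp_all add: d1_def d2_def comb_component_3 plane_basis_def)

lemma d1_neq_0: "d1 \<noteq> 0"
proof
  assume "d1 = 0"
  then have "comb b (1 *s u1 + 0 *s u2) = 0"
    by (simp only: comb_u_lincomb) simp
  then have "1 *s u1 + 0 *s u2 = 0"
    by (rule comb_Fq_eq_0[OF u_lincomb_Fq[OF Fq_1 Fq_0]])
  then have "(1::'a) = 0 \<and> (0::'a) = 0"
    by (rule u_independent)
  then show False
    by simp
qed

lemma spread_subset_plane_if_d2_eq_smult:
  assumes "d2 = mu *s d1" "mu \<notin> Fq q"
  shows "spread q (P2 d1) \<subseteq> plane_pts q b"
proof
  fix p assume "p \<in> spread q (P2 d1)"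
  then obtain u where u: "u \<noteq> 0" "P2 u = P2 d1" "p = P4 q u"
    by (auto simp: spread_def)
  then obtain l where l: "u = l *s d1"
    using P2_eq_imp_smult by blast
  obtain s t where st: "s \<in> Fq q" "t \<in> Fq q" "l = s + t * mu"
    using Fq_decomp[OF assms(2)] by blast
  have "u = comb b (s *s u1 + t *s u2)"
    using l st(3) assms(1) by (simp add: comb_u_lincomb vec_eq_iff algebra_simps)
  moreover have "s *s u1 + t *s u2 \<noteq> 0"
    using calculation u(1) by auto
  ultimately show "p \<in> plane_pts q b"
    unfolding plane_pts_def using u(3) u_lincomb_Fq[OF st(1,2)] by blast
qed

text \<open>The key step: d2 = mu d1 is impossible, for mu in GF(q) because b spans a plane of
  PG(4,q), and for mu outside GF(q) because alpha contains no spread line.\<close>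
lemma d_independent:
  assumes "x *s d1 + y *s d2 = 0"
  shows "x = 0 \<and> y = 0"
proof (rule ccontr)
  assume nz: "\<not> (x = 0 \<and> y = 0)"
  have "y \<noteq> 0"
  proof
    assume "y = 0"
    then have "x *s d1 = 0" "x \<noteq> 0"
      using assms nz by auto
    then show False
      using d1_neq_0 by (simp add: vec_eq_iff)
  qed
  define mu where "mu = - x / y"
  have d2: "d2 = mu *s d1"
  proof -
    have "x * d1 $ i + y * d2 $ i = 0" for i
      using arg_cong[OF assms, of "\<lambda>v. v $ i"] by simp
    then show ?thesis
      using \<open>y \<noteq> 0\<close> by (simp add: vec_eq_iff mu_def field_simps add_eq_0_iff2)
  qed
  show False
  proof (cases "mu \<in> Fq q")
    case True
    have "comb b ((- mu) *s u1 + 1 *s u2) = 0"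
      by (simp only: comb_u_lincomb d2) (simp add: vec_eq_iff)
    then have "(- mu) *s u1 + 1 *s u2 = 0"
      using comb_Fq_eq_0 u_lincomb_Fq[OF Fq_uminus[OF True] Fq_1] by blast
    then have "- mu = 0 \<and> (1::'a) = 0"
      by (rule u_independent)
    then show False
      by simp
  next
    case False
    then show False
      using spread_subset_plane_if_d2_eq_smult[OF d2] no_spread_line d1_neq_0 P2_in_linf_iff
        d_component_3 by blast
  qed
qed

lemma comb_eq_0_iff: "comb b w = 0 \<longleftrightarrow> w = 0"
proof
  assume "comb b w = 0"
  then have "scalar_product inf_normal w = 0"
    using comb_component_3[of w] by simp
  then obtain x y where w: "w = x *s u1 + y *s u2"
    using u_span by blast
  then have "x *s d1 + y *s d2 = 0"
    using \<open>comb b w = 0\<close> comb_u_lincomb by simp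
  then have "x = 0 \<and> y = 0"
    by (rule d_independent)
  then show "w = 0"
    using w by simp
qed simp

lemma comb_inj: "comb b v = comb b w \<Longrightarrow> v = w"
  using comb_eq_0_iff[of "v - w"] by (simp add: comb_eq_transpose matrix_vector_mult_diff_distrib)

lemma det_transpose_neq_0: "det (transpose b) \<noteq> 0"
proof -
  have "\<forall>x. transpose b *v x = 0 \<longrightarrow> x = 0"
    using comb_eq_0_iff by (simp add: comb_eq_transpose)
  then show ?thesis
    using matrix_left_invertible_ker invertible_left_inverse invertible_det_nz by blast
qed

lemma d_lincomb_neq_0: "x \<noteq> 0 \<or> y \<noteq> 0 \<Longrightarrow> x *s d1 + y *s d2 \<noteq> 0"
  using d_independent by blast

lemma P2_d_lincomb_in_linf: "x \<noteq> 0 \<or> y \<noteq> 0 \<Longrightarrow> P2 (x *s d1 + y *s d2) \<in> linf"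
  using P2_in_linf_iff[OF d_lincomb_neq_0] d_component_3 by simp

lemma P2_d_lincomb_eq_iff:
  assumes "x \<noteq> 0 \<or> y \<noteq> 0" "x' \<noteq> 0 \<or> y' \<noteq> 0"
  shows "P2 (x *s d1 + y *s d2) = P2 (x' *s d1 + y' *s d2) \<longleftrightarrow> x * y' - x' * y = 0"
proof
  assume "P2 (x *s d1 + y *s d2) = P2 (x' *s d1 + y' *s d2)"
  then obtain c where "x *s d1 + y *s d2 = c *s (x' *s d1 + y' *s d2)"
    using P2_eq_imp_smult[OF d_lincomb_neq_0[OF assms(1)]] by blast
  then have "(x - c * x') *s d1 + (y - c * y') *s d2 = 0"
    by (simp add: vec_eq_iff algebra_simps)
  then have "x - c * x' = 0 \<and> y - c * y' = 0"
    by (rule d_independent)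
  then show "x * y' - x' * y = 0"
    by (simp add: algebra_simps)
next
  assume "x * y' - x' * y = 0"
  then obtain l where l: "x = l * x'" "y = l * y'"
    using proportional_if_det_eq_0 assms(2) by blast
  then have "l \<noteq> 0"
    using assms(1) by auto
  then show "P2 (x *s d1 + y *s d2) = P2 (x' *s d1 + y' *s d2)"
    using P2_smult[of l "x' *s d1 + y' *s d2"] l by (simp add: vec_eq_iff algebra_simps)
qed

lemma linf_comb_lincomb:
  assumes "P2 (comb b w) \<in> linf" "w \<noteq> 0"
  obtains x y where "w = x *s u1 + y *s u2" "x \<noteq> 0 \<or> y \<noteq> 0"
    "(\<forall>i. w $ i \<in> Fq q) \<Longrightarrow> x \<in> Fq q \<and> y \<in> Fq q"
proof -
  have "comb b w $ 3 = 0"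
    using assms P2_in_linf_iff comb_eq_0_iff by blast
  then have "scalar_product inf_normal w = 0"
    by (simp add: comb_component_3)
  then obtain x y where xy: "w = x *s u1 + y *s u2"
      "(\<forall>i. w $ i \<in> Fq q) \<longrightarrow> x \<in> Fq q \<and> y \<in> Fq q"
    using u_span by blast
  moreover have "x \<noteq> 0 \<or> y \<noteq> 0"
    using xy(1) assms(2) by auto
  ultimately show ?thesis
    using that by blast
qed

lemma baer_transpose: "baer q (transpose b) = {P2 (comb b w) | w. w \<noteq> 0 \<and> (\<forall>i. w $ i \<in> Fq q)}"
  by (simp add: baer_def comb_eq_transpose)

lemma baer_conic_transpose:
  "baer_conic q (transpose b) A = {P2 (comb b w) | w. w \<noteq> 0 \<and> (\<forall>i. w $ i \<in> Fq q) \<and> qf A w = 0}"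
  by (simp add: baer_conic_def comb_eq_transpose)

lemma baer_conic_plus_transpose:
  "baer_conic_plus (transpose b) A = {P2 (comb b w) | w. w \<noteq> 0 \<and> qf A w = 0}"
  by (simp add: baer_conic_plus_def comb_eq_transpose)

lemma affine_point_comb:
  assumes "P2 v = P2 (comb b w)" "v $ 3 = 1" "\<forall>i. w $ i \<in> Fq q"
  shows "\<exists>c\<in>Fq q. c \<noteq> 0 \<and> v = comb b (c *s w)"
proof -
  have "v \<noteq> 0"
    using assms(2) by auto
  then obtain c where c: "c \<noteq> 0" "v = c *s comb b w"
    using P2_eq_imp_smult assms(1) by blast
  then have "c * comb b w $ 3 = 1"
    using assms(2) by simp
  then have "comb b w $ 3 * c = 1"
    by (simp add: mult.commute)
  then have "c = inverse (comb b w $ 3)"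
    by (rule inverse_unique[symmetric])
  then have "c \<in> Fq q"
    using comb_component_3_Fq[OF assms(3)] by auto
  then show ?thesis
    using c by (auto simp: comb_smult)
qed

lemma bbset_comb_image:
  assumes R: "\<And>c w. c \<in> Fq q \<Longrightarrow> c \<noteq> 0 \<Longrightarrow> R (c *s w) \<longleftrightarrow> R w"
  shows "bbset q {P2 (comb b w) | w. w \<noteq> 0 \<and> (\<forall>i. w $ i \<in> Fq q) \<and> R w}
       = {P4 q (comb b w) | w. w \<noteq> 0 \<and> (\<forall>i. w $ i \<in> Fq q) \<and> R w \<and> comb b w $ 3 \<noteq> 0}"
proof (intro equalityI subsetI)
  fix p assume "p \<in> bbset q {P2 (comb b w) | w. w \<noteq> 0 \<and> (\<forall>i. w $ i \<in> Fq q) \<and> R w}"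
  then obtain v w where h: "p = P4 q v" "v $ 3 = 1" "P2 v = P2 (comb b w)" "w \<noteq> 0"
      "\<forall>i. w $ i \<in> Fq q" "R w"
    by (auto simp: bbset_def)
  obtain c where c: "c \<in> Fq q" "c \<noteq> 0" "v = comb b (c *s w)"
    using affine_point_comb[OF h(3,2,5)] by blast
  have "c *s w \<noteq> 0" "\<forall>i. (c *s w) $ i \<in> Fq q" "R (c *s w)" "comb b (c *s w) $ 3 \<noteq> 0"
    using c h R by (auto simp: vec_eq_iff)
  then show "p \<in> {P4 q (comb b w) | w. w \<noteq> 0 \<and> (\<forall>i. w $ i \<in> Fq q) \<and> R w \<and> comb b w $ 3 \<noteq> 0}"
    using h(1) c(3) by blast
next
  fix p assume "p \<in> {P4 q (comb b w) | w. w \<noteq> 0 \<and> (\<forall>i. w $ i \<in> Fq q) \<and> R w \<and> comb b w $ 3 \<noteq> 0}"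
  then obtain w where w: "p = P4 q (comb b w)" "w \<noteq> 0" "\<forall>i. w $ i \<in> Fq q" "R w" "comb b w $ 3 \<noteq> 0"
    by blast
  define c where "c = inverse (comb b w $ 3)"
  have c: "c \<in> Fq q" "c \<noteq> 0"
    using comb_component_3_Fq[OF w(3)] w(5) by (auto simp: c_def)
  have "c *s w \<noteq> 0" "\<forall>i. (c *s w) $ i \<in> Fq q" "R (c *s w)"
    using c w R by (auto simp: vec_eq_iff)
  then have "P2 (comb b (c *s w)) \<in> {P2 (comb b w) | w. w \<noteq> 0 \<and> (\<forall>i. w $ i \<in> Fq q) \<and> R w}"
    by blast
  moreover have "comb b (c *s w) $ 3 = 1" "p = P4 q (comb b (c *s w))"
    using w(1,5) P4_smult[OF c] by (simp_all add: comb_smult c_def)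
  ultimately show "p \<in> bbset q {P2 (comb b w) | w. w \<noteq> 0 \<and> (\<forall>i. w $ i \<in> Fq q) \<and> R w}"
    unfolding bbset_def by blast
qed

lemma bbset_baer_transpose: "bbset q (baer q (transpose b)) = plane_pts q b - sigma_inf q"
proof -
  have "P4 q (comb b w) \<notin> sigma_inf q \<longleftrightarrow> comb b w $ 3 \<noteq> 0" if "w \<noteq> 0" for w
    using that P4_in_sigma_inf_iff comb_eq_0_iff by blast
  then show ?thesis
    using bbset_comb_image[of "\<lambda>_. True"] unfolding baer_transpose plane_pts_def by auto
qed

text \<open>The points of the Baer subplane on l_infinity, parametrised by GF(q) \<union> {\<infinity>}.\<close>
definition inf_point :: "'a option \<Rightarrow> ('a ^ 3) set" where
  "inf_point t = (case t of None \<Rightarrow> P2 d2 | Some t \<Rightarrow> P2 (d1 + t *s d2))"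

lemma inf_point_None_neq_Some: "P2 d2 \<noteq> P2 (d1 + t *s d2)"
  using P2_d_lincomb_eq_iff[of 0 1 1 t] by simp

lemma inf_point_Some_eq_iff: "P2 (d1 + s *s d2) = P2 (d1 + t *s d2) \<longleftrightarrow> s = t"
  using P2_d_lincomb_eq_iff[of 1 s 1 t] by auto

lemma baer_inter_linf: "baer q (transpose b) \<inter> linf = inf_point ` insert None (Some ` Fq q)"
proof (intro equalityI subsetI)
  fix X assume X: "X \<in> baer q (transpose b) \<inter> linf"
  then obtain w where w: "X = P2 (comb b w)" "w \<noteq> 0" "\<forall>i. w $ i \<in> Fq q"
    by (auto simp: baer_transpose)
  moreover have "P2 (comb b w) \<in> linf"
    using X w(1) by blast
  ultimately obtain x y where xy: "w = x *s u1 + y *s u2" "x \<noteq> 0 \<or> y \<noteq> 0"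
      "(\<forall>i. w $ i \<in> Fq q) \<Longrightarrow> x \<in> Fq q \<and> y \<in> Fq q"
    using linf_comb_lincomb by metis
  have X_eq: "X = P2 (x *s d1 + y *s d2)"
    using w(1) xy(1) comb_u_lincomb by simp
  show "X \<in> inf_point ` insert None (Some ` Fq q)"
  proof (cases "x = 0")
    case True
    then have "X = inf_point None"
      unfolding X_eq inf_point_def using xy(2) P2_d_lincomb_eq_iff[of 0 y 0 1] by simp
    then show ?thesis
      by blast
  next
    case False
    then have "X = inf_point (Some (y / x))"
      unfolding X_eq inf_point_def using P2_d_lincomb_eq_iff[of x y 1 "y / x"] by simp
    moreover have "y / x \<in> Fq q"
      using xy(3) w(3) by auto
    ultimately show ?thesis
      by blast
  qed
next
  fix X assume "X \<in> inf_point ` insert None (Some ` Fq q)"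
  then consider "X = P2 (0 *s d1 + 1 *s d2)" | t where "t \<in> Fq q" "X = P2 (1 *s d1 + t *s d2)"
    by (auto simp: inf_point_def)
  then obtain x y where xy: "X = P2 (x *s d1 + y *s d2)" "x \<in> Fq q" "y \<in> Fq q" "x \<noteq> 0 \<or> y \<noteq> 0"
  proof cases
    case 1
    then show ?thesis
      using that[of 0 1] by simp
  next
    case (2 t)
    then show ?thesis
      using that[of 1 t] by simp
  qed
  then have "X = P2 (comb b (x *s u1 + y *s u2))" "x *s u1 + y *s u2 \<noteq> 0"
    using comb_u_lincomb u_independent by auto
  then have "X \<in> baer q (transpose b)"
    unfolding baer_transpose using u_lincomb_Fq[OF xy(2,3)] by blast
  moreover have "X \<in> linf"
    using xy(1) P2_d_lincomb_in_linf[OF xy(4)] by simp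
  ultimately show "X \<in> baer q (transpose b) \<inter> linf"
    by blast
qed

lemma inf_point_inj: "inj_on inf_point (insert None (Some ` Fq q))"
proof (rule inj_onI)
  fix s t assume "inf_point s = inf_point t"
  then show "s = t"
    by (cases s; cases t) (simp_all add: inf_point_def inf_point_Some_eq_iff
        inf_point_None_neq_Some inf_point_None_neq_Some[THEN not_sym])
qed

lemma baer_secant_transpose: "baer_secant q (baer q (transpose b))"
proof -
  have "card (baer q (transpose b) \<inter> linf) = card (insert None (Some ` (Fq q :: 'a set)))"
    unfolding baer_inter_linf by (rule card_image[OF inf_point_inj])
  also have "\<dots> = q + 1"
    by (simp add: card_image card_Fq)
  finally show ?thesis
    using det_transpose_neq_0 unfolding baer_secant_def is_baer_def by blast
qed

lemma spread_part_eq: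
  "{p \<in> plane_pts q b. \<exists>T \<in> baer_conic q (transpose b) A \<inter> linf. p \<in> spread q T}
    = {P4 q (comb b w) | w. w \<noteq> 0 \<and> (\<forall>i. w $ i \<in> Fq q) \<and> qf A w = 0 \<and> comb b w $ 3 = 0}"
proof (intro equalityI subsetI)
  fix p assume "p \<in> {p \<in> plane_pts q b. \<exists>T \<in> baer_conic q (transpose b) A \<inter> linf. p \<in> spread q T}"
  then obtain w' T where p: "p = P4 q (comb b w')" "w' \<noteq> 0" "\<forall>i. w' $ i \<in> Fq q"
      and T: "T \<in> baer_conic q (transpose b) A" "T \<in> linf" "p \<in> spread q T"
    by (auto simp: plane_pts_def)
  then obtain w u where h: "T = P2 (comb b w)" "w \<noteq> 0" "qf A w = 0" "p = P4 q u" "u \<noteq> 0" "P2 u = T"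
    by (auto simp: baer_conic_transpose spread_def)
  obtain l where l: "u = l *s comb b w"
    using P2_eq_imp_smult h by metis
  obtain c where c: "c \<in> Fq q" "c \<noteq> 0" "u = c *s comb b w'"
    using P4_eq_imp_smult h(4,5) p(1) by metis
  have "comb b (c *s w') = comb b (l *s w)"
    using l c by (simp add: comb_smult)
  then have "c *s w' = l *s w"
    by (rule comb_inj)
  then have w': "w' = (l / c) *s w"
    using c(2) by (simp add: vec_eq_iff field_simps)
  have "comb b w $ 3 = 0"
    using T(2) h(1,2) P2_in_linf_iff comb_eq_0_iff by blast
  then have "qf A w' = 0" "comb b w' $ 3 = 0"
    using h(3) by (simp_all add: w' qf_smult comb_smult)
  then show "p \<in> {P4 q (comb b w) | w. w \<noteq> 0 \<and> (\<forall>i. w $ i \<in> Fq q) \<and> qf A w = 0 \<and> comb b w $ 3 = 0}"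
    using p by blast
next
  fix p assume "p \<in> {P4 q (comb b w) | w. w \<noteq> 0 \<and> (\<forall>i. w $ i \<in> Fq q) \<and> qf A w = 0 \<and> comb b w $ 3 = 0}"
  then obtain w where w: "p = P4 q (comb b w)" "w \<noteq> 0" "\<forall>i. w $ i \<in> Fq q" "qf A w = 0"
      "comb b w $ 3 = 0"
    by blast
  have "P2 (comb b w) \<in> baer_conic q (transpose b) A \<inter> linf"
    using w comb_eq_0_iff P2_in_linf_iff by (auto simp: baer_conic_transpose)
  moreover have "p \<in> spread q (P2 (comb b w))"
    using w(1,2) comb_eq_0_iff by (auto simp: spread_def)
  ultimately show "p \<in> {p \<in> plane_pts q b. \<exists>T \<in> baer_conic q (transpose b) A \<inter> linf. p \<in> spread q T}"
    using w by (auto simp: plane_pts_def)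
qed

lemma conic_decomposition:
  "bbset q (baer_conic q (transpose b) A) \<union>
     {p \<in> plane_pts q b. \<exists>T \<in> baer_conic q (transpose b) A \<inter> linf. p \<in> spread q T}
   = conic4 q b A"
proof -
  have "bbset q (baer_conic q (transpose b) A) =
      {P4 q (comb b w) | w. w \<noteq> 0 \<and> (\<forall>i. w $ i \<in> Fq q) \<and> qf A w = 0 \<and> comb b w $ 3 \<noteq> 0}"
    unfolding baer_conic_transpose
    using bbset_comb_image[where R = "\<lambda>w. qf A w = 0"] by (simp add: qf_smult)
  moreover have "conic4 q b A =
      {P4 q (comb b w) | w. w \<noteq> 0 \<and> (\<forall>i. w $ i \<in> Fq q) \<and> qf A w = 0 \<and> comb b w $ 3 \<noteq> 0} \<union>
      {P4 q (comb b w) | w. w \<noteq> 0 \<and> (\<forall>i. w $ i \<in> Fq q) \<and> qf A w = 0 \<and> comb b w $ 3 = 0}"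
    unfolding conic4_def by auto
  ultimately show ?thesis
    unfolding spread_part_eq by simp
qed

lemma spread_meets_conic_imp_in_baer_conic:
  assumes "\<exists>p \<in> conic4 q b A. p \<in> spread q T"
  shows "T \<in> baer_conic q (transpose b) A"
proof -
  obtain w u where h: "P4 q (comb b w) = P4 q u" "w \<noteq> 0" "\<forall>i. w $ i \<in> Fq q" "qf A w = 0"
      "u \<noteq> 0" "P2 u = T"
    using assms by (auto simp: conic4_def spread_def)
  obtain c where "c \<noteq> 0" "u = c *s comb b w"
    using P4_eq_imp_smult[OF h(5) h(1)[symmetric]] by blast
  then have "T = P2 (comb b w)"
    using h(6) P2_smult[OF \<open>c \<noteq> 0\<close>] by simp
  then show ?thesis
    unfolding baer_conic_transpose using h(2-4) by blast
qed

lemma qf_not_vanishing_on_inf_line: "\<exists>x y. qf A (x *s u1 + y *s u2) \<noteq> 0"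
proof (rule ccontr)
  assume "\<nexists>x y. qf A (x *s u1 + y *s u2) \<noteq> 0"
  then have zero: "qf A (x *s u1 + y *s u2) = 0" for x y
    by blast
  have "qf A w = 0" if w: "scalar_product inf_normal w = 0" for w
  proof -
    obtain x y where "w = x *s u1 + y *s u2"
      using u_span[OF w] by blast
    then show ?thesis
      using zero by simp
  qed
  then have "disc A = 0"
    by (rule disc_eq_0_if_qf_vanishes_on_plane[OF inf_normal_neq_0])
  then show False
    using nondeg by (simp add: nondeg_conic4_def)
qed

lemma conic_plus_inter_linf_lincomb:
  assumes "X \<in> baer_conic_plus (transpose b) A \<inter> linf"
  obtains x y where "X = P2 (x *s d1 + y *s d2)" "x \<noteq> 0 \<or> y \<noteq> 0" "qf A (x *s u1 + y *s u2) = 0"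
proof -
  obtain w where w: "X = P2 (comb b w)" "w \<noteq> 0" "qf A w = 0"
    using assms by (auto simp: baer_conic_plus_transpose)
  moreover have "P2 (comb b w) \<in> linf"
    using assms w(1) by blast
  ultimately obtain x y where xy: "w = x *s u1 + y *s u2" "x \<noteq> 0 \<or> y \<noteq> 0"
      "(\<forall>i. w $ i \<in> Fq q) \<Longrightarrow> x \<in> Fq q \<and> y \<in> Fq q"
    using linf_comb_lincomb by metis
  have "X = P2 (x *s d1 + y *s d2)"
    using w(1) xy(1) comb_u_lincomb by simp
  moreover have "qf A (x *s u1 + y *s u2) = 0"
    using w(3) xy(1) by simp
  ultimately show ?thesis
    using that xy(2) by blast
qed

lemma conic_plus_inter_linf_at_most_two:
  assumes "X \<in> baer_conic_plus (transpose b) A \<inter> linf" "Y \<in> baer_conic_plus (transpose b) A \<inter> linf"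
    "Z \<in> baer_conic_plus (transpose b) A \<inter> linf" "X \<noteq> Y" "X \<noteq> Z"
  shows "Y = Z"
proof (rule ccontr)
  assume "Y \<noteq> Z"
  obtain x1 y1 where 1: "X = P2 (x1 *s d1 + y1 *s d2)" "x1 \<noteq> 0 \<or> y1 \<noteq> 0"
      "qf A (x1 *s u1 + y1 *s u2) = 0"
    using conic_plus_inter_linf_lincomb[OF assms(1)] by blast
  obtain x2 y2 where 2: "Y = P2 (x2 *s d1 + y2 *s d2)" "x2 \<noteq> 0 \<or> y2 \<noteq> 0"
      "qf A (x2 *s u1 + y2 *s u2) = 0"
    using conic_plus_inter_linf_lincomb[OF assms(2)] by blast
  obtain x3 y3 where 3: "Z = P2 (x3 *s d1 + y3 *s d2)" "x3 \<noteq> 0 \<or> y3 \<noteq> 0"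
      "qf A (x3 *s u1 + y3 *s u2) = 0"
    using conic_plus_inter_linf_lincomb[OF assms(3)] by blast
  have det: "x1 * y2 - x2 * y1 \<noteq> 0" "x1 * y3 - x3 * y1 \<noteq> 0" "x2 * y3 - x3 * y2 \<noteq> 0"
    using 1 2 3 assms(4,5) \<open>Y \<noteq> Z\<close> P2_d_lincomb_eq_iff by metis+
  define a m c where "a = qf A u1" and "m = qf A (u1 + u2) - qf A u1 - qf A u2" and "c = qf A u2"
  have restriction: "qf A (x *s u1 + y *s u2) = a * x^2 + m * x * y + c * y^2" for x y
    unfolding a_def m_def c_def qf_lincomb by (simp add: algebra_simps)
  have "a * x1^2 + m * x1 * y1 + c * y1^2 = 0" "a * x2^2 + m * x2 * y2 + c * y2^2 = 0"
    "a * x3^2 + m * x3 * y3 + c * y3^2 = 0"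
    using 1(3) 2(3) 3(3) by (simp_all add: restriction)
  from binary_form_eq_0_if_three_zeros[OF this det] have "a = 0 \<and> m = 0 \<and> c = 0" .
  then show False
    using qf_not_vanishing_on_inf_line restriction by simp
qed

lemma special_point_in_conic_plus:
  assumes "X \<in> conic4_ext q b A" "X \<in> join5 (P5 r) (cpt q (P5 s))"
    "s $ 3 = 0" "s $ 4 = 0" "s $ 5 = 0" "r $ 5 = 0"
  shows "P2 (vector [r $ 1, r $ 2, 0]) \<in> baer_conic_plus (transpose b) A"
proof -
  let ?e = "\<lambda>w. \<Sum>i\<in>UNIV. w $ i *s emb q (b $ i)"
  obtain w where w: "X = P5 (?e w)" "w \<noteq> 0" "qf A w = 0"
    using assms(1) by (auto simp: conic4_ext_def)
  obtain x al be where x: "X = P5 x" "x \<noteq> 0" "x = al *s r + conj5 q (be *s s)"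
    using assms(2) by (auto simp: join5_def cpt_def P5_def)
  have "conj5 q (be *s s) $ 1 = 0" "conj5 q (be *s s) $ 2 = 0" "conj5 q (be *s s) $ 5 = 0"
    using assms(3-5) q_ge_2 by (simp_all add: conj5_def power_0_left)
  then have x_comp: "x $ 1 = al * r $ 1" "x $ 2 = al * r $ 2" "x $ 5 = 0"
    using x(3) assms(6) by simp_all
  have "P5 x = P5 (?e w)"
    using x(1) w(1) by simp
  then obtain c where c: "c \<noteq> 0" "x = c *s ?e w"
    using P5_eq_imp_smult[OF x(2)] by blast
  have cw: "comb b w = (al / c) *s vector [r $ 1, r $ 2, 0]"
    using c x_comp emb_lincomb_components[of w q b] by (simp add: vec_eq_iff forall_3 field_simps)
  have "al / c \<noteq> 0"
  proof
    assume "al / c = 0"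
    then have "comb b w = 0"
      using cw by simp
    then show False
      using w(2) comb_eq_0_iff by blast
  qed
  from P2_smult[OF this, of "vector [r $ 1, r $ 2, 0]"]
  have "P2 (vector [r $ 1, r $ 2, 0]) = P2 (comb b w)"
    using cw by simp
  then show ?thesis
    unfolding baer_conic_plus_transpose using w(2,3) by blast
qed

lemma special_conic_plus_inter_linf:
  assumes "P \<in> gpts" "Q \<in> gpts" "P \<noteq> Q" "special q b A P Q"
  shows "baer_conic_plus (transpose b) A \<inter> linf = {T. corr q T P \<or> corr q T Q}"
proof -
  obtain p where p: "P = P5 p" "p \<noteq> 0" "p $ 3 = 0" "p $ 4 = 0" "p $ 5 = 0"
    using assms(1) by (auto simp: gpts_def)
  obtain r where r: "Q = P5 r" "r \<noteq> 0" "r $ 3 = 0" "r $ 4 = 0" "r $ 5 = 0"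
    using assms(2) by (auto simp: gpts_def)
  define P' Q' where "P' = P2 (vector [p $ 1, p $ 2, 0])" and "Q' = P2 (vector [r $ 1, r $ 2, 0])"
  have corr: "{T. corr q T P \<or> corr q T Q} = {P', Q'}"
    unfolding p(1) r(1) corr_iff[OF p(2-5)] corr_iff[OF r(2-5)] P'_def Q'_def by blast
  have "P' \<noteq> Q'"
  proof
    assume "P' = Q'"
    moreover have "vector [p $ 1, p $ 2, 0] \<noteq> (0 :: 'a ^ 3)"
      using p(2-5) by (auto simp: vec_eq_iff forall_3 forall_5)
    ultimately obtain k where
      k: "k \<noteq> 0" "vector [p $ 1, p $ 2, 0] = k *s (vector [r $ 1, r $ 2, 0] :: 'a ^ 3)"
      using P2_eq_imp_smult unfolding P'_def Q'_def by blast
    have "p $ 1 = k * r $ 1" "p $ 2 = k * r $ 2"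
      using arg_cong[OF k(2), of "\<lambda>v. v $ 1"] arg_cong[OF k(2), of "\<lambda>v. v $ 2"] by simp_all
    then have "p = k *s r"
      using p(3-5) r(3-5) by (simp add: vec_eq_iff forall_5)
    then have "P = Q"
      using p(1) r(1) P5_smult[OF k(1)] by simp
    then show False
      using assms(3) by simp
  qed
  obtain X Y where XY: "X \<in> conic4_ext q b A" "X \<in> join5 P (cpt q Q)"
      "Y \<in> conic4_ext q b A" "Y \<in> join5 Q (cpt q P)"
    using assms(4) join5_commute unfolding special_def by blast
  have "P' \<in> baer_conic_plus (transpose b) A" "Q' \<in> baer_conic_plus (transpose b) A"
    using special_point_in_conic_plus[OF XY(1,2)[unfolded p(1) r(1)] r(3-5) p(5)]
      special_point_in_conic_plus[OF XY(3,4)[unfolded p(1) r(1)] p(3-5) r(5)]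
    unfolding P'_def Q'_def by blast+
  moreover have "P' \<in> linf" "Q' \<in> linf"
    using p r unfolding P'_def Q'_def linf_def by (auto simp: vec_eq_iff forall_3 forall_5)
  ultimately show ?thesis
    unfolding corr using \<open>P' \<noteq> Q'\<close> conic_plus_inter_linf_at_most_two by blast
qed

end

theorem theorem5p4:
  fixes q :: nat and b A :: "'a::{field,finite} ^ 3 ^ 3"
  assumes q_pp: "\<exists>p k. prime p \<and> k \<ge> 1 \<and> q = p ^ k"
    and card: "CARD('a) = q ^ 2"
    and N: "nondeg_conic4 q b A"
    and not_inf: "\<not> plane_pts q b \<subseteq> sigma_inf q"
    and no_spread: "\<forall>T\<in>linf. \<not> spread q T \<subseteq> plane_pts q b"
  shows "\<exists>M AC.
     det M \<noteq> 0 \<and> baer_secant q (baer q M) \<and>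
     bbset q (baer q M) = plane_pts q b - sigma_inf q \<and>
     form_over q AC \<and> disc AC \<noteq> 0 \<and>
     bbset q (baer_conic q M AC) \<union>
       {p \<in> plane_pts q b. \<exists>T \<in> baer_conic q M AC \<inter> linf. p \<in> spread q T}
       = conic4 q b A \<and>
     (\<forall>T\<in>linf. (\<exists>p \<in> conic4 q b A. p \<in> spread q T) \<longrightarrow> T \<in> baer_conic q M AC) \<and>
     (\<forall>P Q. P \<in> gpts \<and> Q \<in> gpts \<and> P \<noteq> Q \<and> special q b A P Q \<longrightarrow>
        baer_conic_plus M AC \<inter> linf = {Tb. corr q Tb P \<or> corr q Tb Q})"
proof -
  interpret bruck_bose_conic q b A
    by unfold_locales (use assms in auto)
  have "form_over q A" "disc A \<noteq> 0"
    using N by (simp_all add: nondeg_conic4_def)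
  moreover have "\<forall>T\<in>linf. (\<exists>p \<in> conic4 q b A. p \<in> spread q T) \<longrightarrow> T \<in> baer_conic q (transpose b) A"
    using spread_meets_conic_imp_in_baer_conic by blast
  moreover have "\<forall>P Q. P \<in> gpts \<and> Q \<in> gpts \<and> P \<noteq> Q \<and> special q b A P Q \<longrightarrow>
      baer_conic_plus (transpose b) A \<inter> linf = {T. corr q T P \<or> corr q T Q}"
    using special_conic_plus_inter_linf by blast
  ultimately show ?thesis
    using det_transpose_neq_0 baer_secant_transpose bbset_baer_transpose conic_decomposition
    by (intro exI[of _ "transpose b"] exI[of _ A] conjI) assumption+
qed

end
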